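(* Let $n\ge2$ and let $g_1,\dots,g_r\in\mathbb R[X_1,\dots,X_n]$ satisfy $1-\|\mathbf X\|_2^2\in\mathcal Q(\mathbf g)$ and $\|g_i\|\le\tfrac12$ for all $i$, and assume the CQC holds at every point of $S=\mathcal S(\mathbf g)$. Let $\gamma(n,\mathbf g)\ge1$ be a constant depending only on $n,\mathbf g$ such that every $h\in\mathbb R[\mathbf X]$ with $\min_Sh>0$ lies in $\mathcal Q_\ell(\mathbf g)$ whenever $\ell\ge\gamma(n,\mathbf g)\,d(h)^{3.5n}\epsilon(h)^{-2.5n}$; put $\gamma'(n,\mathbf g)=3^{2.5n}\gamma(n,\mathbf g)$ and $\gamma''(n,\mathbf g)=\gamma'(n,\mathbf g)^{1/(2.5n)}$. Let $f\in\mathbb R[\mathbf X]$ with $f\ge0$ on $S$ and $f^*=\min_Sf$. Then $$0\le f^*-f^*_{\mathrm{SoS},\ell}\le\gamma''(n,\mathbf g)\,\|f\|\,d(f)^{7/5}\,\ell^{-\frac1{2.5n}}.$$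
   Context: $\Sigma^2$ sums of squares; $\mathcal S(\mathbf g)=\{x:g_i(x)\ge0\ \forall i\}$ (nonempty); $\mathcal Q(\mathbf g)=\Sigma^2+\sum_i\Sigma^2g_i$; $\mathcal Q_\ell(\mathbf g)=\{s_0+\sum_is_ig_i: s_j\in\Sigma^2,\deg s_0\le\ell,\deg(s_ig_i)\le\ell\}$; $\|h\|=\max_{[-1,1]^n}|h|$; $d(h)=\deg h$; $\epsilon(h)=\min_Sh/\|h\|$; $f^*_{\mathrm{SoS},\ell}=\sup\{\lambda\in\mathbb R: f-\lambda\in\mathcal Q_{2\ell}(\mathbf g)\}$. CQC at $x\in S$: the gradients $\nabla g_i(x)$ of the constraints with $g_i(x)=0$ are linearly independent. *)

theory Defs
  imports "HOL-Analysis.Analysis" "HOL-Library.Poly_Mapping"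
begin

text \<open>Real multivariate polynomials in the variables indexed by the finite type 'n
  (so n = CARD('n)): finitely supported maps from exponent vectors to coefficients,
  with the library's convolution product.\<close>
type_synonym 'n mpoly = "('n \<Rightarrow>\<^sub>0 nat) \<Rightarrow>\<^sub>0 real"

definition mpeval :: "'n mpoly \<Rightarrow> ('n \<Rightarrow> real) \<Rightarrow> real" where
  "mpeval p x = (\<Sum>m\<in>Poly_Mapping.keys p. Poly_Mapping.lookup p m * (\<Prod>i\<in>Poly_Mapping.keys (m::'n \<Rightarrow>\<^sub>0 nat). x i ^ Poly_Mapping.lookup m i))"

definition mpdeg :: "'n mpoly \<Rightarrow> nat" where
  "mpdeg p = (if p = 0 then 0 else Max ((\<lambda>m::'n \<Rightarrow>\<^sub>0 nat. \<Sum>i\<in>Poly_Mapping.keys m. Poly_Mapping.lookup m i) ` Poly_Mapping.keys p))"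

definition sos :: "'n mpoly \<Rightarrow> bool" where
  "sos p \<longleftrightarrow> (\<exists>qs. p = sum_list (map (\<lambda>q. q * q) qs))"

definition semialg :: "nat \<Rightarrow> (nat \<Rightarrow> 'n mpoly) \<Rightarrow> ('n \<Rightarrow> real) set" where
  "semialg r g = {x. \<forall>i<r. mpeval (g i) x \<ge> 0}"

definition qmod :: "nat \<Rightarrow> (nat \<Rightarrow> 'n mpoly) \<Rightarrow> 'n mpoly set" where
  "qmod r g = {h. \<exists>s. (\<forall>j\<le>r. sos (s j)) \<and> h = s r + (\<Sum>i<r. s i * g i)}"

text \<open>truncated quadratic module Q_l(g); s r plays the role of s_0\<close>
definition qmod_trunc :: "nat \<Rightarrow> (nat \<Rightarrow> 'n mpoly) \<Rightarrow> nat \<Rightarrow> 'n mpoly set" where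
  "qmod_trunc r g l = {h. \<exists>s. (\<forall>j\<le>r. sos (s j)) \<and> mpdeg (s r) \<le> l
       \<and> (\<forall>i<r. mpdeg (s i * g i) \<le> l) \<and> h = s r + (\<Sum>i<r. s i * g i)}"

definition supnorm :: "'n mpoly \<Rightarrow> real" where
  "supnorm h = (SUP x\<in>{x. \<forall>i. \<bar>x i\<bar> \<le> 1}. \<bar>mpeval h x\<bar>)"

definition min_on :: "('n \<Rightarrow> real) set \<Rightarrow> 'n mpoly \<Rightarrow> real" where
  "min_on S h = (INF x\<in>S. mpeval h x)"

definition epsilon :: "('n \<Rightarrow> real) set \<Rightarrow> 'n mpoly \<Rightarrow> real" where
  "epsilon S h = min_on S h / supnorm h"

definition sos_bound :: "nat \<Rightarrow> (nat \<Rightarrow> 'n mpoly) \<Rightarrow> nat \<Rightarrow> 'n mpoly \<Rightarrow> real" where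
  "sos_bound r g l f = Sup {c::real. f - Poly_Mapping.single 0 c \<in> qmod_trunc r g (2 * l)}"

definition grad :: "'n mpoly \<Rightarrow> ('n \<Rightarrow> real) \<Rightarrow> ('n \<Rightarrow> real)" where
  "grad p x = (\<lambda>i. deriv (\<lambda>t. mpeval p (x(i := t))) (x i))"

definition CQC :: "nat \<Rightarrow> (nat \<Rightarrow> 'n mpoly) \<Rightarrow> ('n \<Rightarrow> real) \<Rightarrow> bool" where
  "CQC r g x \<longleftrightarrow> (let A = {i. i < r \<and> mpeval (g i) x = 0} in
     \<forall>c::nat \<Rightarrow> real. (\<forall>k. (\<Sum>i\<in>A. c i * grad (g i) x k) = 0) \<longrightarrow> (\<forall>i\<in>A. c i = 0))"

definition one_minus_normsq :: "'n::finite mpoly" where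
  "one_minus_normsq = 1 - (\<Sum>i\<in>UNIV. Poly_Mapping.single (Poly_Mapping.single i 2) 1)"

end

theory Submission
  imports Defs
begin

text \<open>Let \<delta> be the right-hand side of the estimate and \<delta>' > \<delta>. The shifted polynomial
  h = f - (f* - \<delta>') has minimum \<delta>' on S, and since S lies in the unit cube and
  0 \<le> f* \<le> \<parallel>f\<parallel>, also \<parallel>h\<parallel> \<le> 2 max \<parallel>f\<parallel> \<delta>', so \<epsilon>(h) \<ge> min (1/2) (\<delta>'/(2\<parallel>f\<parallel>)).
  The value of \<delta> is exactly the one for which the degree bound of the Positivstellensatz
  then holds at level \<ell>, so h \<in> Q_2\<ell>(g) and f* - \<delta>' \<le> f*_SoS. Conversely every element
  of Q(g) is nonnegative on S, so f*_SoS \<le> f*.\<close>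

abbreviation mpconst :: "real \<Rightarrow> 'n mpoly" where
  "mpconst c \<equiv> Poly_Mapping.single 0 c"

definition monom_eval :: "('n \<Rightarrow>\<^sub>0 nat) \<Rightarrow> ('n \<Rightarrow> real) \<Rightarrow> real" where
  "monom_eval m x = (\<Prod>i\<in>Poly_Mapping.keys m. x i ^ Poly_Mapping.lookup m i)"

lemma monom_eval_UNIV: "monom_eval m x = (\<Prod>i\<in>UNIV. x i ^ Poly_Mapping.lookup m (i::'n::finite))"
  unfolding monom_eval_def
  by (rule prod.mono_neutral_left) (auto simp: in_keys_iff)

lemma monom_eval_add: "monom_eval (a + b) x = monom_eval a x * monom_eval (b::'n::finite \<Rightarrow>\<^sub>0 nat) x"
  by (simp add: monom_eval_UNIV lookup_add power_add prod.distrib)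

lemma monom_eval_0 [simp]: "monom_eval 0 x = 1"
  by (simp add: monom_eval_def)

lemma mpeval_eq_sum_monom_eval:
  "mpeval p x = (\<Sum>m\<in>Poly_Mapping.keys p. Poly_Mapping.lookup p m * monom_eval m x)"
  unfolding mpeval_def monom_eval_def ..

lemma mpeval_eq_sum_superset:
  assumes "finite K" "Poly_Mapping.keys p \<subseteq> K"
  shows "mpeval p x = (\<Sum>m\<in>K. Poly_Mapping.lookup p m * monom_eval m x)"
  unfolding mpeval_eq_sum_monom_eval
  by (rule sum.mono_neutral_left) (use assms in \<open>auto simp: in_keys_iff\<close>)

lemma mpeval_0 [simp]: "mpeval 0 x = 0"
  by (simp add: mpeval_def)

lemma mpeval_single: "mpeval (Poly_Mapping.single m c) x = c * monom_eval m x"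
  by (simp add: mpeval_eq_sum_monom_eval)

lemma mpeval_const [simp]: "mpeval (mpconst c) x = c"
  by (simp add: mpeval_single)

lemma mpeval_1 [simp]: "mpeval 1 x = 1"
  by (simp add: mpeval_eq_sum_monom_eval)

lemma mpeval_add: "mpeval (p + q) x = mpeval p x + mpeval q x"
proof -
  let ?K = "Poly_Mapping.keys p \<union> Poly_Mapping.keys q \<union> Poly_Mapping.keys (p + q)"
  have "mpeval (p + q) x = (\<Sum>m\<in>?K. Poly_Mapping.lookup (p + q) m * monom_eval m x)"
    by (rule mpeval_eq_sum_superset) auto
  also have "\<dots> = (\<Sum>m\<in>?K. Poly_Mapping.lookup p m * monom_eval m x)
                  + (\<Sum>m\<in>?K. Poly_Mapping.lookup q m * monom_eval m x)"
    by (simp add: lookup_add distrib_right sum.distrib)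
  also have "\<dots> = mpeval p x + mpeval q x"
    by (subst (1 2) mpeval_eq_sum_superset[of ?K]) auto
  finally show ?thesis .
qed

lemma mpeval_uminus: "mpeval (- p) x = - mpeval p x"
  using mpeval_add[of "- p" p x] by simp

lemma mpeval_diff: "mpeval (p - q) x = mpeval p x - mpeval q x"
  using mpeval_add[of p "- q" x] by (simp add: mpeval_uminus)

lemma mpeval_sum: "mpeval (\<Sum>i\<in>I. p i) x = (\<Sum>i\<in>I. mpeval (p i) x)"
  by (induction I rule: infinite_finite_induct) (auto simp: mpeval_add)

lemma mpoly_eq_sum_single:
  "p = (\<Sum>m\<in>Poly_Mapping.keys p. Poly_Mapping.single m (Poly_Mapping.lookup p m))"
  by (rule poly_mapping_eqI) (auto simp: lookup_sum lookup_single when_def in_keys_iff)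

lemma mpeval_mult: "mpeval (p * q) x = mpeval p x * mpeval (q::'n::finite mpoly) x"
proof -
  let ?P = "Poly_Mapping.keys p" and ?Q = "Poly_Mapping.keys q"
  have "p * q = (\<Sum>a\<in>?P. Poly_Mapping.single a (Poly_Mapping.lookup p a)) *
                (\<Sum>b\<in>?Q. Poly_Mapping.single b (Poly_Mapping.lookup q b))"
    using mpoly_eq_sum_single[of p] mpoly_eq_sum_single[of q] by simp
  also have "\<dots> = (\<Sum>a\<in>?P. \<Sum>b\<in>?Q.
                    Poly_Mapping.single (a + b) (Poly_Mapping.lookup p a * Poly_Mapping.lookup q b))"
    by (simp add: sum_product mult_single)
  finally have "mpeval (p * q) x = (\<Sum>a\<in>?P. \<Sum>b\<in>?Q.
                  (Poly_Mapping.lookup p a * monom_eval a x) * (Poly_Mapping.lookup q b * monom_eval b x))"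
    by (simp add: mpeval_sum mpeval_single monom_eval_add algebra_simps)
  also have "\<dots> = mpeval p x * mpeval q x"
    by (simp add: mpeval_eq_sum_monom_eval sum_product)
  finally show ?thesis .
qed

lemma sos_nonneg:
  assumes "sos p"
  shows "mpeval (p::'n::finite mpoly) x \<ge> 0"
proof -
  have "mpeval (sum_list (map (\<lambda>q. q * q) qs)) x \<ge> 0" for qs :: "'n mpoly list"
    by (induction qs) (auto simp: mpeval_add mpeval_mult)
  then show ?thesis using assms unfolding sos_def by auto
qed

lemma qmod_nonneg:
  assumes "h \<in> qmod r g" "x \<in> semialg r g"
  shows "mpeval (h::'n::finite mpoly) x \<ge> 0"
proof -
  obtain s where s: "\<forall>j\<le>r. sos (s j)" "h = s r + (\<Sum>i<r. s i * g i)"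
    using assms(1) unfolding qmod_def by auto
  have "mpeval h x = mpeval (s r) x + (\<Sum>i<r. mpeval (s i) x * mpeval (g i) x)"
    by (simp add: s(2) mpeval_add mpeval_sum mpeval_mult)
  also have "\<dots> \<ge> 0"
    using s(1) assms(2) unfolding semialg_def
    by (intro add_nonneg_nonneg sum_nonneg mult_nonneg_nonneg) (auto intro: sos_nonneg)
  finally show ?thesis .
qed

lemma qmod_trunc_subset_qmod: "qmod_trunc r g k \<subseteq> qmod r g"
  unfolding qmod_trunc_def qmod_def by blast

lemma qmod_trunc_diff_const_le:
  assumes "f - mpconst c \<in> qmod_trunc r g k" "x \<in> semialg r g"
  shows "c \<le> mpeval (f::'n::finite mpoly) x"
  using qmod_nonneg[OF subsetD[OF qmod_trunc_subset_qmod assms(1)] assms(2)]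
  by (simp add: mpeval_diff)

definition cube :: "('n \<Rightarrow> real) set" where
  "cube = {x. \<forall>i. \<bar>x i\<bar> \<le> 1}"

lemma semialg_subset_cube:
  assumes "one_minus_normsq \<in> qmod r g"
  shows "semialg r (g::nat \<Rightarrow> 'n::finite mpoly) \<subseteq> cube"
proof
  fix x assume x: "x \<in> semialg r g"
  have "\<bar>x i\<bar> \<le> 1" for i
  proof -
    have "x i ^ 2 \<le> (\<Sum>j\<in>UNIV. x j ^ 2)"
      by (rule member_le_sum) auto
    also have "\<dots> \<le> 1"
      using qmod_nonneg[OF assms x]
      by (simp add: one_minus_normsq_def mpeval_diff mpeval_sum mpeval_single monom_eval_def)
    finally show ?thesis by (simp add: abs_square_le_1)
  qed
  then show "x \<in> cube" by (simp add: cube_def)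
qed

lemma abs_monom_eval_le_1: "x \<in> cube \<Longrightarrow> \<bar>monom_eval m x\<bar> \<le> 1"
  unfolding monom_eval_def cube_def abs_prod power_abs
  by (rule prod_le_1) (auto intro: power_le_one)

lemma abs_mpeval_le_sum_abs_coeffs:
  assumes "x \<in> cube"
  shows "\<bar>mpeval p x\<bar> \<le> (\<Sum>m\<in>Poly_Mapping.keys p. \<bar>Poly_Mapping.lookup p m\<bar>)"
proof -
  have "\<bar>mpeval p x\<bar> \<le> (\<Sum>m\<in>Poly_Mapping.keys p. \<bar>Poly_Mapping.lookup p m * monom_eval m x\<bar>)"
    unfolding mpeval_eq_sum_monom_eval by (rule sum_abs)
  also have "\<dots> \<le> (\<Sum>m\<in>Poly_Mapping.keys p. \<bar>Poly_Mapping.lookup p m\<bar>)"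
    using abs_monom_eval_le_1[OF assms]
    by (intro sum_mono) (auto simp: abs_mult intro: mult_left_le)
  finally show ?thesis .
qed

lemma supnorm_cube: "supnorm h = (SUP x\<in>cube. \<bar>mpeval h x\<bar>)"
  by (simp add: supnorm_def cube_def)

lemma abs_mpeval_le_supnorm:
  assumes "x \<in> cube"
  shows "\<bar>mpeval p x\<bar> \<le> supnorm p"
proof -
  have "bdd_above ((\<lambda>x. \<bar>mpeval p x\<bar>) ` cube)"
    using abs_mpeval_le_sum_abs_coeffs by (intro bdd_aboveI2) auto
  then show ?thesis
    unfolding supnorm_cube using assms by (intro cSUP_upper)
qed

lemma zero_in_cube: "(\<lambda>_. 0) \<in> cube"
  by (simp add: cube_def)

lemma supnorm_nonneg: "0 \<le> supnorm p"
  using abs_mpeval_le_supnorm[OF zero_in_cube, of p] by linarith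

lemma supnorm_diff_const_le: "supnorm (p - mpconst c) \<le> supnorm p + \<bar>c\<bar>"
  unfolding supnorm_cube[of "p - _"]
proof (rule cSUP_least)
  show "cube \<noteq> {}"
    using zero_in_cube by blast
  fix x :: "'a \<Rightarrow> real" assume "x \<in> cube"
  then show "\<bar>mpeval (p - mpconst c) x\<bar> \<le> supnorm p + \<bar>c\<bar>"
    using abs_mpeval_le_supnorm[of x p] by (simp add: mpeval_diff)
qed

lemma mpdeg_diff_const_le: "mpdeg (f - mpconst c) \<le> mpdeg f"
proof (cases "f - mpconst c = 0")
  case True
  then show ?thesis by (simp add: mpdeg_def)
next
  case False
  have "(\<Sum>i\<in>Poly_Mapping.keys m. Poly_Mapping.lookup m i) \<le> mpdeg f"
    if m: "m \<in> Poly_Mapping.keys (f - mpconst c)" for m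
  proof (cases "m = 0")
    case False
    with m have "m \<in> Poly_Mapping.keys f"
      by (auto simp: in_keys_iff lookup_minus lookup_single when_def)
    then show ?thesis
      unfolding mpdeg_def by (auto intro!: Max_ge)
  qed simp
  with False show ?thesis
    unfolding mpdeg_def[of "f - mpconst c"] by (auto simp: Max_le_iff)
qed

lemma min_on_le_mpeval: "bdd_below (mpeval f ` S) \<Longrightarrow> x \<in> S \<Longrightarrow> min_on S f \<le> mpeval f x"
  unfolding min_on_def by (rule cINF_lower)

lemma le_min_on: "S \<noteq> {} \<Longrightarrow> (\<And>x. x \<in> S \<Longrightarrow> c \<le> mpeval f x) \<Longrightarrow> c \<le> min_on S f"
  unfolding min_on_def by (rule cINF_greatest)

lemma min_on_diff_const_ge:
  assumes "S \<noteq> {}" "bdd_below (mpeval f ` S)"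
  shows "\<delta> \<le> min_on S (f - mpconst (min_on S f - \<delta>))"
  using assms min_on_le_mpeval[OF assms(2)]
  by (intro le_min_on) (auto simp: mpeval_diff)

lemma sos_bound_le_min_on:
  assumes "semialg r g \<noteq> {}" and "f - mpconst c \<in> qmod_trunc r g (2 * l)"
  shows "sos_bound r g l f \<le> min_on (semialg r g) (f::'n::finite mpoly)"
  unfolding sos_bound_def using assms
  by (intro cSup_least le_min_on) (auto intro: qmod_trunc_diff_const_le)

lemma le_sos_bound:
  assumes "semialg r g \<noteq> {}"
    and "\<And>e. e > 0 \<Longrightarrow> f - mpconst (a - e) \<in> qmod_trunc r g (2 * l)"
  shows "a \<le> sos_bound r g l (f::'n::finite mpoly)"
proof (rule field_le_epsilon)
  fix e :: real assume "e > 0"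
  obtain x0 where "x0 \<in> semialg r g" using assms(1) by blast
  then have "bdd_above {c. f - mpconst c \<in> qmod_trunc r g (2 * l)}"
    by (intro bdd_aboveI) (auto intro: qmod_trunc_diff_const_le)
  with assms(2)[OF \<open>e > 0\<close>] have "a - e \<le> sos_bound r g l f"
    unfolding sos_bound_def by (intro cSup_upper) auto
  then show "a \<le> sos_bound r g l f + e" by simp
qed

lemma epsilon_diff_const_ge:
  assumes cube: "S \<subseteq> cube" and "S \<noteq> {}" and nonneg: "\<forall>x\<in>S. 0 \<le> mpeval f x" and "\<delta> > 0"
  shows "\<delta> / (2 * max (supnorm f) \<delta>) \<le> epsilon S (f - mpconst (min_on S f - \<delta>))"
proof -
  define h where "h = f - mpconst (min_on S f - \<delta>)"
  obtain x0 where x0: "x0 \<in> S" using \<open>S \<noteq> {}\<close> by blast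
  have bdd: "bdd_below (mpeval f ` S)"
    using nonneg by (intro bdd_belowI2) auto
  have min_nonneg: "0 \<le> min_on S f"
    using \<open>S \<noteq> {}\<close> nonneg by (intro le_min_on) auto
  have "min_on S f \<le> supnorm f"
    using min_on_le_mpeval[OF bdd x0] abs_mpeval_le_supnorm[of x0 f] x0 cube by auto
  then have norm_h: "supnorm h \<le> 2 * max (supnorm f) \<delta>"
    using supnorm_diff_const_le[of f "min_on S f - \<delta>"] min_nonneg \<open>\<delta> > 0\<close>
    unfolding h_def by linarith
  have "\<delta> \<le> mpeval h x0"
    using min_on_le_mpeval[OF bdd x0] by (simp add: h_def mpeval_diff)
  then have "\<delta> \<le> supnorm h"
    using abs_mpeval_le_supnorm[of x0 h] x0 cube by auto
  have "\<delta> \<le> min_on S h"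
    unfolding h_def using \<open>S \<noteq> {}\<close> bdd by (rule min_on_diff_const_ge)
  then have "\<delta> / supnorm h \<le> epsilon S h"
    unfolding epsilon_def using \<open>\<delta> \<le> supnorm h\<close> \<open>\<delta> > 0\<close> by (simp add: divide_right_mono)
  moreover have "\<delta> / (2 * max (supnorm f) \<delta>) \<le> \<delta> / supnorm h"
    using norm_h \<open>\<delta> \<le> supnorm h\<close> \<open>\<delta> > 0\<close> by (intro divide_left_mono) auto
  ultimately show ?thesis
    unfolding h_def by linarith
qed

lemma powr_gap_identity:
  fixes \<gamma> N d l m \<delta> :: real
  assumes "m > 0" "\<gamma> > 0" "N > 0" "d > 0" "l > 0"
    and \<delta>: "\<delta> = (3 powr m * \<gamma>) powr (1/m) * N * d powr (7/5) * l powr (-1/m)"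
  shows "\<gamma> * d powr (7/5 * m) * (2 * N / \<delta>) powr m = (2/3) powr m * l"
proof -
  have "\<delta> powr m = ((3 powr m * \<gamma>) powr (1/m)) powr m * N powr m
      * (d powr (7/5)) powr m * (l powr (-1/m)) powr m"
    unfolding \<delta> powr_mult ..
  also have "\<dots> = 3 powr m * \<gamma> * N powr m * d powr (7/5 * m) * l powr (-1)"
    using assms by (simp only: powr_powr) simp
  also have "\<dots> = 3 powr m * \<gamma> * N powr m * d powr (7/5 * m) / l"
    using assms by simp
  finally have "\<delta> powr m = 3 powr m * \<gamma> * N powr m * d powr (7/5 * m) / l" .
  then have "(2 * N / \<delta>) powr m = 2 powr m * l / (3 powr m * \<gamma> * d powr (7/5 * m))"
    using assms by (simp add: powr_divide powr_mult field_simps)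
  then show ?thesis
    using assms by (simp add: powr_divide field_simps)
qed

lemma degree_bound_le:
  fixes \<gamma> N d k l m \<delta> \<delta>' e :: real
  assumes "m > 0" "\<gamma> \<ge> 1" "0 \<le> k" "k \<le> d" "N \<ge> 0"
    and l: "3 powr m * \<gamma> * d powr (7/5 * m) \<le> l"
    and \<delta>: "\<delta> = (3 powr m * \<gamma>) powr (1/m) * N * d powr (7/5) * l powr (-1/m)"
    and "\<delta> < \<delta>'" and e: "\<delta>' / (2 * max N \<delta>') \<le> e"
  shows "\<gamma> * k powr (7/5 * m) * e powr (-m) \<le> l"
proof (cases "k = 0")
  case True
  have "0 \<le> 3 powr m * \<gamma> * d powr (7/5 * m)"
    using \<open>\<gamma> \<ge> 1\<close> by simp
  then show ?thesis
    using l True by simp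
next
  case False
  then have "d > 0"
    using assms(3,4) by linarith
  then have "l > 0"
    using l \<open>\<gamma> \<ge> 1\<close> by (smt (verit) mult_pos_pos powr_gt_zero)
  have "0 \<le> \<delta>"
    using \<delta> \<open>N \<ge> 0\<close> \<open>\<gamma> \<ge> 1\<close> by simp
  then have "0 < \<delta>'"
    using \<open>\<delta> < \<delta>'\<close> by linarith
  define e0 where "e0 = \<delta>' / (2 * max N \<delta>')"
  have "e0 > 0"
    using \<open>0 < \<delta>'\<close> by (simp add: e0_def)
  have "e0 powr (-m) \<le> max (2 powr m) ((2 * N / \<delta>) powr m)"
  proof (cases "N \<le> \<delta>'")
    case True
    then have "e0 = 1/2"
      using \<open>0 < \<delta>'\<close> by (simp add: e0_def)
    have "(1/2) powr (-m) = 2 powr m"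
      by (simp add: powr_minus_divide powr_divide)
    then show ?thesis
      unfolding \<open>e0 = 1/2\<close> by simp
  next
    case False
    then have "N > 0" "\<delta> > 0"
      using \<open>0 < \<delta>'\<close> \<delta> \<open>d > 0\<close> \<open>l > 0\<close> \<open>\<gamma> \<ge> 1\<close> by auto
    have "\<delta> / (2 * N) \<le> e0"
      using False \<open>\<delta> < \<delta>'\<close> \<open>N > 0\<close> by (simp add: e0_def divide_right_mono)
    then have "e0 powr (-m) \<le> (\<delta> / (2 * N)) powr (-m)"
      using \<open>m > 0\<close> \<open>N > 0\<close> \<open>\<delta> > 0\<close> by (intro powr_mono2') auto
    also have "\<dots> = (2 * N / \<delta>) powr m"
      by (simp add: powr_minus_divide powr_divide)
    finally show ?thesis by simp
  qed
  moreover have "\<gamma> * d powr (7/5 * m) * 2 powr m \<le> l"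
  proof -
    have "2 powr m \<le> 3 powr m"
      using \<open>m > 0\<close> by (intro powr_mono2) auto
    then have "\<gamma> * d powr (7/5 * m) * 2 powr m \<le> \<gamma> * d powr (7/5 * m) * 3 powr m"
      using \<open>\<gamma> \<ge> 1\<close> by (intro mult_left_mono) auto
    also have "\<dots> = 3 powr m * \<gamma> * d powr (7/5 * m)"
      by (simp add: mult_ac)
    finally show ?thesis
      using l by linarith
  qed
  moreover have "\<gamma> * d powr (7/5 * m) * (2 * N / \<delta>) powr m \<le> l"
  proof (cases "N > 0")
    case True
    then have "\<gamma> * d powr (7/5 * m) * (2 * N / \<delta>) powr m = (2/3) powr m * l"
      using \<open>m > 0\<close> \<open>\<gamma> \<ge> 1\<close> \<open>d > 0\<close> \<open>l > 0\<close> \<delta> by (intro powr_gap_identity) auto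
    also have "\<dots> \<le> l"
      using \<open>m > 0\<close> \<open>l > 0\<close> by (simp add: powr_le1)
    finally show ?thesis .
  qed (use \<open>l > 0\<close> \<open>N \<ge> 0\<close> in simp)
  ultimately have "\<gamma> * d powr (7/5 * m) * e0 powr (-m) \<le> l"
    using \<open>\<gamma> \<ge> 1\<close> by (smt (verit) mult_left_mono mult_nonneg_nonneg powr_ge_zero)
  moreover have "\<gamma> * k powr (7/5 * m) * e powr (-m) \<le> \<gamma> * d powr (7/5 * m) * e0 powr (-m)"
  proof (intro mult_mono mult_left_mono)
    show "k powr (7/5 * m) \<le> d powr (7/5 * m)"
      using assms(1,3,4) by (intro powr_mono2) auto
    show "e powr (-m) \<le> e0 powr (-m)"
      using \<open>m > 0\<close> \<open>e0 > 0\<close> e unfolding e0_def[symmetric] by (intro powr_mono2') auto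
  qed (use \<open>\<gamma> \<ge> 1\<close> in auto)
  ultimately show ?thesis by linarith
qed

theorem mainTheorem19:
  fixes g :: "nat \<Rightarrow> 'n::finite mpoly" and r :: nat and \<gamma> :: real
    and f :: "'n mpoly" and l :: nat
  assumes n2: "CARD('n) \<ge> 2"
    and arch: "one_minus_normsq \<in> qmod r g"
    and gnorm: "\<forall>i<r. supnorm (g i) \<le> 1/2"
    and Sne: "semialg r g \<noteq> {}"
    and cqc: "\<forall>x\<in>semialg r g. CQC r g x"
    and gamma1: "\<gamma> \<ge> 1"
    and gamma: "\<forall>(h :: 'n mpoly) (k :: nat). min_on (semialg r g) h > 0 \<and>
        real k \<ge> \<gamma> * real (mpdeg h) powr (3.5 * CARD('n))
                 * epsilon (semialg r g) h powr (- 2.5 * CARD('n))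
        \<longrightarrow> h \<in> qmod_trunc r g k"
    and fnn: "\<forall>x\<in>semialg r g. mpeval f x \<ge> 0"
    and lbig: "real l \<ge> (3 powr (2.5 * CARD('n)) * \<gamma>) * real (mpdeg f) powr (3.5 * CARD('n))"
  shows "0 \<le> min_on (semialg r g) f - sos_bound r g l f \<and>
         min_on (semialg r g) f - sos_bound r g l f
           \<le> (3 powr (2.5 * CARD('n)) * \<gamma>) powr (1 / (2.5 * CARD('n)))
             * supnorm f * real (mpdeg f) powr (7/5) * real l powr (- 1 / (2.5 * CARD('n)))"
proof -
  \<comment> \<open>n2, gnorm and cqc are the hypotheses under which the paper's Positivstellensatz
    provides \<gamma>; here that result is the hypothesis gamma.\<close>
  define S where "S = semialg r g"
  define m :: real where "m = 2.5 * CARD('n)"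
  define \<delta> where "\<delta> = (3 powr m * \<gamma>) powr (1/m) * supnorm f * real (mpdeg f) powr (7/5) * real l powr (-1/m)"
  have "m > 0" and exponents: "3.5 * real CARD('n) = 7/5 * m" "- 2.5 * real CARD('n) = - m"
    by (simp_all add: m_def)
  have l_big: "3 powr m * \<gamma> * real (mpdeg f) powr (7/5 * m) \<le> real l"
    using lbig unfolding exponents m_def .
  have "0 \<le> \<delta>"
    using gamma1 supnorm_nonneg[of f] by (simp add: \<delta>_def)
  have shift_mem: "f - mpconst (min_on S f - \<delta>') \<in> qmod_trunc r g (2 * l)" if "\<delta> < \<delta>'" for \<delta>'
  proof -
    let ?h = "f - mpconst (min_on S f - \<delta>')"
    have "0 < \<delta>'"
      using \<open>0 \<le> \<delta>\<close> that by linarith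
    moreover have "\<delta>' \<le> min_on S ?h"
      using Sne fnn unfolding S_def by (intro min_on_diff_const_ge bdd_belowI2) auto
    moreover have "\<gamma> * real (mpdeg ?h) powr (7/5 * m) * epsilon S ?h powr (- m) \<le> real l"
      using \<open>m > 0\<close> gamma1 mpdeg_diff_const_le supnorm_nonneg l_big \<delta>_def that
        epsilon_diff_const_ge[OF semialg_subset_cube[OF arch] Sne fnn \<open>0 < \<delta>'\<close>, folded S_def]
      by (intro degree_bound_le[where d = "real (mpdeg f)" and N = "supnorm f" and \<delta>' = \<delta>']) auto
    ultimately show ?thesis
      using gamma unfolding S_def exponents by force
  qed
  have "sos_bound r g l f \<le> min_on S f"
    using sos_bound_le_min_on[OF Sne shift_mem[of "\<delta> + 1"]] unfolding S_def by simp
  moreover have "min_on S f - \<delta> \<le> sos_bound r g l f"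
    using Sne shift_mem by (intro le_sos_bound) (auto simp: S_def diff_diff_eq)
  ultimately show ?thesis
    unfolding S_def \<delta>_def m_def by simp
qed

end
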